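(* The $(1+1)$-type unbiased black-box complexity of the $\mathrm{DLB}$ problem is $O(n^2)$: there exists a $(1+1)$-type unary unbiased black-box algorithm whose expected runtime on $\mathrm{DLB}:\{0,1\}^n\to\mathbb{R}$ is $O(n^2)$.
   Context: Let $n$ be an even positive integer. For $x\in\{0,1\}^n$ consider the blocks $(x_{2\ell+1},x_{2\ell+2})$, $\ell=0,\dots,\frac n2-1$. If $x\neq(1,\dots,1)$, let $m$ be the smallest $\ell$ with $x_{2\ell+1}\neq 1$ or $x_{2\ell+2}\neq 1$, and define $\mathrm{DLB}(x)=2m+1$ if $x_{2m+1}+x_{2m+2}=0$ and $\mathrm{DLB}(x)=2m$ if $x_{2m+1}+x_{2m+2}=1$; set $\mathrm{DLB}(1,\dots,1)=n$. A unary unbiased variation operator $V$ assigns to each $x\in\{0,1\}^n$ a probability distribution $V(x)$ on $\{0,1\}^n$ such that for all $x,y,z$, $\Pr[y=V(x)]=\Pr[y\oplus z=V(x\oplus z)]$, and for all permutations $\sigma$ of $[1..n]$, $\Pr[y=V(x)]=\Pr[\sigma(y)=V(\sigma(x))]$, where $\sigma(x)=(x_{\sigma(1)},\dots,x_{\sigma(n)})$. A $(1+1)$-type unbiased black-box algorithm keeps a single current search point, initially uniformly random; in each iteration it produces one new search point by applying a unary unbiased variation operator to the current point, evaluates it, and decides whether to replace the current point by the new one; all choices (operator and acceptance) depend only on the fitness values observed so far. The runtime is the number of fitness evaluations until (and including) the first evaluation of an optimum; the complexity is the infimum of the expected runtime over all such algorithms. *)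

theory Defs
  imports "HOL-Probability.Probability" "HOL-Combinatorics.Permutations"
begin

text \<open>Bit strings of length n are lists of booleans of length n (True = 1).
  Position i of the list (0-based) is the paper's bit x_(i+1).\<close>

definition bitstrings :: "nat \<Rightarrow> bool list set" where
  "bitstrings n = {x. length x = n}"

definition bxor :: "bool list \<Rightarrow> bool list \<Rightarrow> bool list" where
  "bxor x z = map2 (\<lambda>a b. a \<noteq> b) x z"

definition perm_bits :: "nat \<Rightarrow> (nat \<Rightarrow> nat) \<Rightarrow> bool list \<Rightarrow> bool list" where
  "perm_bits n \<sigma> x = map (\<lambda>i. x ! \<sigma> i) [0..<n]"

definition DLB :: "nat \<Rightarrow> bool list \<Rightarrow> real" where
  "DLB n x = (if x = replicate n True then real n
     else (let m = (LEAST l. l < n div 2 \<and> \<not> (x ! (2*l) \<and> x ! (2*l+1))) in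
       if \<not> x ! (2*m) \<and> \<not> x ! (2*m+1) then real (2*m+1) else real (2*m)))"

definition unary_unbiased :: "nat \<Rightarrow> (bool list \<Rightarrow> bool list pmf) \<Rightarrow> bool" where
  "unary_unbiased n V \<longleftrightarrow>
     (\<forall>x\<in>bitstrings n. set_pmf (V x) \<subseteq> bitstrings n) \<and>
     (\<forall>x\<in>bitstrings n. \<forall>y\<in>bitstrings n. \<forall>z\<in>bitstrings n.
        pmf (V x) y = pmf (V (bxor x z)) (bxor y z)) \<and>
     (\<forall>\<sigma>. \<sigma> permutes {..<n} \<longrightarrow> (\<forall>x\<in>bitstrings n. \<forall>y\<in>bitstrings n.
        pmf (V x) y = pmf (V (perm_bits n \<sigma> x)) (perm_bits n \<sigma> y)))"

definition is_opt :: "nat \<Rightarrow> (bool list \<Rightarrow> real) \<Rightarrow> bool list \<Rightarrow> bool" where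
  "is_opt n f y \<longleftrightarrow> length y = n \<and> (\<forall>z\<in>bitstrings n. f z \<le> f y)"

text \<open>A (1+1)-type unbiased algorithm is given by
  ops h : the unary unbiased operator used when the fitness history is h, and
  acc h : the (possibly randomised) acceptance decision, where h is the fitness
          history including the fitness of the new offspring.
  Process states: (current point, fitness history, optimum already evaluated?).
  The state after t+1 fitness evaluations is alg_states n f ops acc t.\<close>

definition alg_init :: "nat \<Rightarrow> (bool list \<Rightarrow> real) \<Rightarrow> (bool list \<times> real list \<times> bool) pmf" where
  "alg_init n f = map_pmf (\<lambda>x. (x, [f x], is_opt n f x)) (pmf_of_set (bitstrings n))"

definition alg_step :: "nat \<Rightarrow> (bool list \<Rightarrow> real) \<Rightarrow> (real list \<Rightarrow> bool list \<Rightarrow> bool list pmf)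
    \<Rightarrow> (real list \<Rightarrow> bool pmf) \<Rightarrow> bool list \<times> real list \<times> bool
    \<Rightarrow> (bool list \<times> real list \<times> bool) pmf" where
  "alg_step n f ops acc s = (case s of (x, h, fd) \<Rightarrow>
     bind_pmf (ops h x) (\<lambda>y. let h' = h @ [f y] in
       map_pmf (\<lambda>b. (if b then y else x, h', fd \<or> is_opt n f y)) (acc h')))"

primrec alg_states :: "nat \<Rightarrow> (bool list \<Rightarrow> real) \<Rightarrow> (real list \<Rightarrow> bool list \<Rightarrow> bool list pmf)
    \<Rightarrow> (real list \<Rightarrow> bool pmf) \<Rightarrow> nat \<Rightarrow> (bool list \<times> real list \<times> bool) pmf" where
  "alg_states n f ops acc 0 = alg_init n f"
| "alg_states n f ops acc (Suc t) = bind_pmf (alg_states n f ops acc t) (alg_step n f ops acc)"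

text \<open>Expected runtime E[T] = sum_{k>=0} Pr[T > k], where Pr[T > 0] = 1 and
  Pr[T > t+1] = Pr[no optimum among the first t+1 evaluated points].\<close>
definition exp_runtime :: "nat \<Rightarrow> (bool list \<Rightarrow> real) \<Rightarrow> (real list \<Rightarrow> bool list \<Rightarrow> bool list pmf)
    \<Rightarrow> (real list \<Rightarrow> bool pmf) \<Rightarrow> ennreal" where
  "exp_runtime n f ops acc =
     1 + (\<Sum>t. ennreal (measure_pmf.prob (alg_states n f ops acc t) {s. \<not> snd (snd s)}))"

end

theory Submission
  imports Defs
begin

(* Randomised local search flips one uniformly random bit and accepts the offspring iff its
   fitness differs from the current one and is at most one smaller. Let m be the first block
   that is not 11. Flipping a bit in an earlier block gives fitness at most 2m - 2, flipping a
   bit in a later block does not change the fitness, so both are rejected. Inside block m the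
   search moves 00 -> 01/10 (fitness 2m+1 -> 2m), 01 -> 00 (2m -> 2m+1) and 01 -> 11
   (fitness at least 2m+2). With the potential n(n-k+1) at odd fitness k and n(n-k) - n/2 at
   even fitness k < n, every non-optimal point loses at least 1 in expectation per step, and
   the potential is at most n^2, so by additive drift the expected runtime is at most
   1 + n^2. *)

section \<open>Additive drift for Markov chains of pmfs\<close>

lemma pmf_chain_invariant:
  fixes M :: "nat \<Rightarrow> 's pmf" and K :: "'s \<Rightarrow> 's pmf"
  assumes M_Suc: "\<And>t. M (Suc t) = bind_pmf (M t) K"
    and init: "\<And>s. s \<in> set_pmf (M 0) \<Longrightarrow> P s"
    and step: "\<And>s s'. P s \<Longrightarrow> s' \<in> set_pmf (K s) \<Longrightarrow> P s'"
  shows "s \<in> set_pmf (M t) \<Longrightarrow> P s"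
proof (induction t arbitrary: s)
  case 0
  then show ?case by (rule init)
next
  case (Suc t)
  then show ?case using step unfolding M_Suc by auto
qed

lemma pmf_chain_additive_drift:
  fixes M :: "nat \<Rightarrow> 's pmf" and K :: "'s \<Rightarrow> 's pmf" and \<Phi> :: "'s \<Rightarrow> ennreal"
  assumes M_Suc: "\<And>t. M (Suc t) = bind_pmf (M t) K"
    and drift: "\<And>t s. s \<in> set_pmf (M t) \<Longrightarrow> (\<integral>\<^sup>+s'. \<Phi> s' \<partial>K s) + indicator A s \<le> \<Phi> s"
  shows "(\<Sum>t. ennreal (measure_pmf.prob (M t) A)) \<le> (\<integral>\<^sup>+s. \<Phi> s \<partial>M 0)"
proof -
  have partial: "(\<Sum>t<N. ennreal (measure_pmf.prob (M t) A)) + (\<integral>\<^sup>+s. \<Phi> s \<partial>M N)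
      \<le> (\<integral>\<^sup>+s. \<Phi> s \<partial>M 0)" for N
  proof (induction N)
    case 0
    then show ?case by simp
  next
    case (Suc N)
    have "(\<integral>\<^sup>+s. \<Phi> s \<partial>M (Suc N)) + ennreal (measure_pmf.prob (M N) A)
        = (\<integral>\<^sup>+s. (\<integral>\<^sup>+s'. \<Phi> s' \<partial>K s) + indicator A s \<partial>M N)"
      by (simp add: M_Suc nn_integral_add measure_pmf.emeasure_eq_measure[symmetric])
    also have "\<dots> \<le> (\<integral>\<^sup>+s. \<Phi> s \<partial>M N)"
      by (rule nn_integral_mono_AE) (simp add: AE_measure_pmf_iff drift)
    finally have "(\<Sum>t<Suc N. ennreal (measure_pmf.prob (M t) A)) + (\<integral>\<^sup>+s. \<Phi> s \<partial>M (Suc N))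
        \<le> (\<Sum>t<N. ennreal (measure_pmf.prob (M t) A)) + (\<integral>\<^sup>+s. \<Phi> s \<partial>M N)"
      by (simp add: add.assoc add.commute add_left_mono)
    then show ?case using Suc.IH by (rule order_trans)
  qed
  show ?thesis
    unfolding suminf_eq_SUP
    by (rule SUP_least) (rule order_trans[OF add_increasing2[OF zero_le order_refl] partial])
qed

section \<open>Leading blocks of DLB\<close>

definition block_ones :: "bool list \<Rightarrow> nat \<Rightarrow> bool" where
  "block_ones x l \<longleftrightarrow> x ! (2*l) \<and> x ! (2*l+1)"

definition first_incomplete_block :: "nat \<Rightarrow> bool list \<Rightarrow> nat \<Rightarrow> bool" where
  "first_incomplete_block n x m \<longleftrightarrow>
     m < n div 2 \<and> (\<forall>l<m. block_ones x l) \<and> \<not> block_ones x m"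

lemma replicate_True_if_all_block_ones:
  assumes "length x = n" "even n" "\<forall>l<n div 2. block_ones x l"
  shows "x = replicate n True"
proof (rule nth_equalityI)
  show "length x = length (replicate n True)" using assms(1) by simp
  fix i assume i: "i < length x"
  then have "i div 2 < n div 2" using assms(1,2) by (auto elim!: evenE)
  then have "block_ones x (i div 2)" using assms(3) by blast
  moreover have "i = 2*(i div 2) \<or> i = 2*(i div 2)+1" by presburger
  ultimately show "x ! i = replicate n True ! i"
    using i assms(1) unfolding block_ones_def by (metis nth_replicate)
qed

lemma first_incomplete_block_exists:
  assumes "length x = n" "even n" "x \<noteq> replicate n True"
  obtains m where "first_incomplete_block n x m"
proof -
  have "\<exists>l. l < n div 2 \<and> \<not> block_ones x l"
    using replicate_True_if_all_block_ones assms by blast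
  then obtain m where "m < n div 2 \<and> \<not> block_ones x m"
      and "\<forall>l<m. \<not> (l < n div 2 \<and> \<not> block_ones x l)"
    unfolding exists_least_iff[of "\<lambda>l. l < n div 2 \<and> \<not> block_ones x l"] by blast
  then show thesis using that unfolding first_incomplete_block_def by auto
qed

lemma DLB_replicate_True [simp]: "DLB n (replicate n True) = real n"
  unfolding DLB_def by simp

lemma DLB_first_incomplete_block:
  assumes "length x = n" "first_incomplete_block n x m"
  shows "DLB n x = real (if \<not> x ! (2*m) \<and> \<not> x ! (2*m+1) then 2*m+1 else 2*m)"
proof -
  have m: "m < n div 2" "\<forall>l<m. block_ones x l" "\<not> block_ones x m"
    using assms(2) unfolding first_incomplete_block_def by auto
  have "2*m+1 < n" using m(1) by auto
  then have "x \<noteq> replicate n True"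
    using m(3) unfolding block_ones_def by (metis Suc_eq_plus1 Suc_lessD nth_replicate)
  moreover have "(LEAST l. l < n div 2 \<and> \<not> (x ! (2*l) \<and> x ! (2*l+1))) = m"
    by (rule Least_equality) (use m in \<open>auto simp: block_ones_def not_less[symmetric]\<close>)
  ultimately show ?thesis unfolding DLB_def by (simp add: Let_def)
qed

lemma DLB_ge_if_leading_block_ones:
  assumes "length x = n" "even n" "L \<le> n div 2" "\<forall>l<L. block_ones x l"
  shows "2 * L \<le> DLB n x"
proof (cases "x = replicate n True")
  case True
  then show ?thesis using assms(2,3) by (auto elim!: evenE)
next
  case False
  then obtain m where m: "first_incomplete_block n x m"
    using first_incomplete_block_exists assms(1,2) by blast
  then have "L \<le> m" using assms(4) unfolding first_incomplete_block_def by (meson not_less)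
  then show ?thesis using DLB_first_incomplete_block[OF assms(1) m] by auto
qed

lemma DLB_le:
  assumes "length x = n" "even n"
  shows "DLB n x \<le> n"
proof (cases "x = replicate n True")
  case True
  then show ?thesis by simp
next
  case False
  then obtain m where m: "first_incomplete_block n x m"
    using first_incomplete_block_exists assms by blast
  then have "2*m+1 \<le> n" using assms(2) unfolding first_incomplete_block_def by (auto elim!: evenE)
  then show ?thesis using DLB_first_incomplete_block[OF assms(1) m] by auto
qed

lemma is_opt_replicate_True: "even n \<Longrightarrow> is_opt n (DLB n) (replicate n True)"
  unfolding is_opt_def bitstrings_def using DLB_le by auto

section \<open>One step of randomised local search\<close>

definition flip_bit :: "bool list \<Rightarrow> nat \<Rightarrow> bool list" where
  "flip_bit x i = x[i := \<not> x ! i]"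

lemma length_flip_bit [simp]: "length (flip_bit x i) = length x"
  unfolding flip_bit_def by simp

lemma nth_flip_bit: "j < length x \<Longrightarrow> flip_bit x i ! j = (if j = i then \<not> x ! i else x ! j)"
  unfolding flip_bit_def by (cases "i < length x") auto

lemma block_ones_flip_bit_other:
  assumes "2*l+1 < length x" "i div 2 \<noteq> l"
  shows "block_ones (flip_bit x i) l = block_ones x l"
proof -
  have "i \<noteq> 2*l" "i \<noteq> 2*l+1" using assms(2) by auto
  then show ?thesis using assms(1) unfolding block_ones_def by (simp add: nth_flip_bit)
qed

lemma first_incomplete_block_flip_bit_earlier:
  assumes "length x = n" "first_incomplete_block n x m" "i div 2 < m"
  shows "first_incomplete_block n (flip_bit x i) (i div 2)"
proof -
  have "2*m+1 < n" using assms(2) unfolding first_incomplete_block_def by auto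
  moreover have "block_ones x (i div 2)" using assms(2,3) unfolding first_incomplete_block_def by auto
  moreover have "i = 2*(i div 2) \<or> i = 2*(i div 2)+1" by presburger
  ultimately show ?thesis
    using assms unfolding first_incomplete_block_def block_ones_def by (auto simp: nth_flip_bit)
qed

lemma first_incomplete_block_flip_bit_later:
  assumes "length x = n" "first_incomplete_block n x m" "m \<le> i div 2"
    "\<not> block_ones (flip_bit x i) m"
  shows "first_incomplete_block n (flip_bit x i) m"
proof -
  have "block_ones (flip_bit x i) l = block_ones x l" if "l < m" for l
    using that assms(1-3) by (intro block_ones_flip_bit_other) (auto simp: first_incomplete_block_def)
  then show ?thesis using assms(2,4) unfolding first_incomplete_block_def by auto
qed

lemma DLB_flip_bit_earlier:
  assumes "length x = n" "first_incomplete_block n x m" "i div 2 < m"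
  shows "DLB n (flip_bit x i) = real (2 * (i div 2))"
proof -
  have "2*m+1 < n" using assms(2) unfolding first_incomplete_block_def by auto
  moreover have "block_ones x (i div 2)"
    using assms(2,3) unfolding first_incomplete_block_def by auto
  moreover have "i = 2*(i div 2) \<or> i = 2*(i div 2)+1" by presburger
  ultimately show ?thesis
    using assms(1,3) DLB_first_incomplete_block[OF _ first_incomplete_block_flip_bit_earlier[OF assms]]
    unfolding block_ones_def by (auto simp: nth_flip_bit)
qed

lemma DLB_flip_bit_later:
  assumes "length x = n" "first_incomplete_block n x m" "m < i div 2"
  shows "DLB n (flip_bit x i) = DLB n x"
proof -
  have "2*m+1 < n" using assms(2) unfolding first_incomplete_block_def by auto
  moreover have "i \<noteq> 2*m" "i \<noteq> 2*m+1" using assms(3) by auto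
  moreover have "first_incomplete_block n (flip_bit x i) m"
    using assms block_ones_flip_bit_other[of m x i] calculation(1)
    by (intro first_incomplete_block_flip_bit_later) (auto simp: first_incomplete_block_def)
  ultimately show ?thesis
    using assms(1) DLB_first_incomplete_block assms(2) by (simp add: nth_flip_bit)
qed

definition accept :: "real \<Rightarrow> real \<Rightarrow> bool" where
  "accept c w \<longleftrightarrow> w \<noteq> c \<and> c - 1 \<le> w"

definition rls_step :: "nat \<Rightarrow> bool list \<Rightarrow> nat \<Rightarrow> bool list" where
  "rls_step n x i = (if accept (DLB n x) (DLB n (flip_bit x i)) then flip_bit x i else x)"

lemma rls_step_outside_first_incomplete_block:
  assumes "length x = n" "first_incomplete_block n x m" "i div 2 \<noteq> m"
  shows "rls_step n x i = x"
proof (cases "i div 2 < m")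
  case True
  have "2*m \<le> DLB n x" using DLB_first_incomplete_block[OF assms(1,2)] by simp
  then show ?thesis
    using True DLB_flip_bit_earlier[OF assms(1,2) True] by (simp add: rls_step_def accept_def)
next
  case False
  then have "m < i div 2" using assms(3) by simp
  then show ?thesis using DLB_flip_bit_later[OF assms(1,2)] by (simp add: rls_step_def accept_def)
qed

(* From fitness 2m+1 both flips in block m gain n/2; from fitness 2m the backward flip loses
   n/2 and the forward flip gains at least 3n/2. Either way the n possible flips gain at least n
   in total. *)
definition level_potential :: "nat \<Rightarrow> nat \<Rightarrow> real" where
  "level_potential n k = (if n \<le> k then 0
     else if odd k then real n * (real n - real k + 1)
     else real n * (real n - real k) - real n / 2)"

definition potential :: "nat \<Rightarrow> bool list \<Rightarrow> real" where
  "potential n x = level_potential n (nat \<lfloor>DLB n x\<rfloor>)"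

lemma potential_eq_level_potential: "DLB n x = real k \<Longrightarrow> potential n x = level_potential n k"
  unfolding potential_def by simp

lemma level_potential_nonneg: "0 \<le> level_potential n k"
proof (cases "k < n")
  case True
  then have "1 \<le> real n - real k" by linarith
  then have "real n / 2 \<le> real n * (real n - real k)"
    using mult_left_mono[of 1 "real n - real k" "real n"] by simp
  then show ?thesis using True unfolding level_potential_def by auto
next
  case False
  then show ?thesis unfolding level_potential_def by simp
qed

lemma level_potential_le_square: "level_potential n k \<le> real n ^ 2"
proof -
  have "real n * (real n - real k + 1) \<le> real n * real n" if "odd k"
    using that by (intro mult_left_mono) (auto elim!: oddE)
  moreover have "real n * (real n - real k) \<le> real n * real n"
    by (intro mult_left_mono) auto
  ultimately show ?thesis unfolding level_potential_def by (auto simp: power2_eq_square)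
qed

lemma level_potential_le_if_ge:
  assumes "2*m+2 \<le> k" "2*m+2 \<le> n"
  shows "level_potential n k \<le> real n * (real n - real (2*m+2))"
proof -
  have "real n * (real n - real k + 1) \<le> real n * (real n - real (2*m+2))" if "odd k"
  proof -
    have "2*m+3 \<le> k" using that assms(1) by presburger
    then show ?thesis by (intro mult_left_mono) auto
  qed
  moreover have "real n * (real n - real k) \<le> real n * (real n - real (2*m+2))"
    using assms(1) by (intro mult_left_mono) auto
  moreover have "0 \<le> real n * (real n - real (2*m+2))" using assms(2) by simp
  ultimately show ?thesis unfolding level_potential_def by auto
qed

lemma potential_nonneg: "0 \<le> potential n x"
  unfolding potential_def by (rule level_potential_nonneg)

lemma potential_le_square: "potential n x \<le> real n ^ 2"
  unfolding potential_def by (rule level_potential_le_square)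

lemma potential_drop_first_incomplete_block:
  assumes "length x = n" "even n" "first_incomplete_block n x m"
  shows "real n \<le> (\<Sum>i\<in>{2*m, 2*m+1}. potential n x - potential n (rls_step n x i))"
proof -
  have mn: "2*m+2 \<le> n"
    using assms(2,3) unfolding first_incomplete_block_def by (auto elim!: evenE)
  show ?thesis
  proof (cases "\<not> x ! (2*m) \<and> \<not> x ! (2*m+1)")
    case True
    then have x: "DLB n x = real (2*m+1)" using DLB_first_incomplete_block[OF assms(1,3)] by simp
    have "DLB n (flip_bit x i) = real (2*m)" if i: "i \<in> {2*m, 2*m+1}" for i
    proof -
      have "first_incomplete_block n (flip_bit x i) m"
        using i True mn assms(1)
        by (intro first_incomplete_block_flip_bit_later[OF assms(1,3)])
          (auto simp: block_ones_def nth_flip_bit)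
      then show ?thesis
        using DLB_first_incomplete_block[of "flip_bit x i" n m] i True mn assms(1)
        by (auto simp: nth_flip_bit)
    qed
    then have "potential n (rls_step n x i) = level_potential n (2*m)" if "i \<in> {2*m, 2*m+1}" for i
      using that x by (simp add: rls_step_def accept_def potential_eq_level_potential)
    then show ?thesis
      using mn potential_eq_level_potential[OF x] by (simp add: level_potential_def)
  next
    case False
    obtain a b where ab: "{a, b} = {2*m, 2*m+1}" "a \<noteq> b" "x ! a" "\<not> x ! b"
    proof (cases "x ! (2*m)")
      case True
      then show ?thesis
        using that[of "2*m" "2*m+1"] assms(3) unfolding first_incomplete_block_def block_ones_def
        by auto
    next
      case F: False
      then show ?thesis using that[of "2*m+1" "2*m"] False by auto
    qed
    then have a_b: "a div 2 = m" "b div 2 = m" "a < n" "b < n"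
      using mn by (auto simp: doubleton_eq_iff)
    have x: "DLB n x = real (2*m)"
      using DLB_first_incomplete_block[OF assms(1,3)] False by simp
    have "first_incomplete_block n (flip_bit x a) m"
      using ab a_b assms(1) mn
      by (intro first_incomplete_block_flip_bit_later[OF assms(1,3)])
        (auto simp: block_ones_def nth_flip_bit doubleton_eq_iff)
    then have fa: "DLB n (flip_bit x a) = real (2*m+1)"
      using DLB_first_incomplete_block[of "flip_bit x a" n m] ab a_b assms(1)
      by (auto simp: nth_flip_bit doubleton_eq_iff)
    have "block_ones (flip_bit x b) l" if "l < Suc m" for l
    proof (cases "l = m")
      case True
      then show ?thesis using ab a_b assms(1) by (auto simp: block_ones_def nth_flip_bit doubleton_eq_iff)
    next
      case False
      then show ?thesis
        using that a_b assms(1,3) mn block_ones_flip_bit_other[of l x b]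
        unfolding first_incomplete_block_def by auto
    qed
    then have fb: "real (2*m+2) \<le> DLB n (flip_bit x b)"
      using DLB_ge_if_leading_block_ones[of "flip_bit x b" n "Suc m"] assms(1,2) mn by auto
    have "potential n (flip_bit x b) \<le> real n * (real n - real (2*m+2))"
      unfolding potential_def using fb mn by (intro level_potential_le_if_ge) linarith+
    moreover have "potential n (flip_bit x a) = real n * (real n - real (2*m))"
      using potential_eq_level_potential[OF fa] mn by (simp add: level_potential_def)
    moreover have "potential n x = real n * (real n - real (2*m)) - real n / 2"
      using potential_eq_level_potential[OF x] mn by (simp add: level_potential_def)
    moreover have "rls_step n x a = flip_bit x a" "rls_step n x b = flip_bit x b"
      using fa fb x by (auto simp: rls_step_def accept_def)
    ultimately have "real n \<le> (\<Sum>i\<in>{a, b}. potential n x - potential n (rls_step n x i))"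
      using ab(2) by (simp add: algebra_simps)
    then show ?thesis using ab(1) by simp
  qed
qed

lemma potential_drift:
  assumes "length x = n" "even n" "x \<noteq> replicate n True"
  shows "real n + (\<Sum>i<n. potential n (rls_step n x i)) \<le> real n * potential n x"
proof -
  obtain m where m: "first_incomplete_block n x m"
    using first_incomplete_block_exists assms by blast
  have "{2*m, 2*m+1} \<subseteq> {..<n}"
    using m assms(2) unfolding first_incomplete_block_def by (auto elim!: evenE)
  moreover have "rls_step n x i = x" if "i \<notin> {2*m, 2*m+1}" for i
  proof -
    have "i div 2 \<noteq> m" using that by (simp, presburger)
    then show ?thesis by (rule rls_step_outside_first_incomplete_block[OF assms(1) m])
  qed
  ultimately have "(\<Sum>i\<in>{2*m, 2*m+1}. potential n x - potential n (rls_step n x i))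
      = (\<Sum>i<n. potential n x - potential n (rls_step n x i))"
    by (intro sum.mono_neutral_left) auto
  then show ?thesis
    using potential_drop_first_incomplete_block[OF assms(1,2) m] by (simp add: sum_subtractf)
qed

section \<open>Unbiasedness of the one-bit flip\<close>

definition rls :: "nat \<Rightarrow> bool list \<Rightarrow> bool list pmf" where
  "rls n x = map_pmf (flip_bit x) (pmf_of_set {..<n})"

definition diff_positions :: "nat \<Rightarrow> bool list \<Rightarrow> bool list \<Rightarrow> nat set" where
  "diff_positions n x y = {i. i < n \<and> x ! i \<noteq> y ! i}"

lemma flip_bit_eq_iff:
  assumes "length x = n" "length y = n" "i < n"
  shows "flip_bit x i = y \<longleftrightarrow> diff_positions n x y = {i}"
proof
  assume "flip_bit x i = y"
  then show "diff_positions n x y = {i}"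
    using assms by (auto simp: diff_positions_def nth_flip_bit split: if_splits)
next
  assume D: "diff_positions n x y = {i}"
  show "flip_bit x i = y"
  proof (rule nth_equalityI)
    show "length (flip_bit x i) = length y" using assms by simp
    fix j assume "j < length (flip_bit x i)"
    then have "j < n" using assms(1) by simp
    moreover have "x ! j \<noteq> y ! j \<longleftrightarrow> j = i"
      using D \<open>j < n\<close> unfolding diff_positions_def by blast
    ultimately show "flip_bit x i ! j = y ! j" using assms(1) by (auto simp: nth_flip_bit)
  qed
qed

lemma pmf_rls:
  assumes "length x = n" "length y = n" "0 < n"
  shows "pmf (rls n x) y = (if card (diff_positions n x y) = 1 then 1 / real n else 0)"
proof -
  define D where "D = diff_positions n x y"
  have "{..<n} \<inter> flip_bit x -` {y} = {i. i < n \<and> D = {i}}"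
    using flip_bit_eq_iff[OF assms(1,2)] unfolding D_def by auto
  moreover have "card {i. i < n \<and> D = {i}} = (if card D = 1 then 1 else 0)"
  proof (cases "card D = 1")
    case True
    then obtain j where "D = {j}" by (auto simp: card_Suc_eq)
    moreover have "j < n" using \<open>D = {j}\<close> unfolding D_def diff_positions_def by auto
    ultimately have "{i. i < n \<and> D = {i}} = {j}" by auto
    then show ?thesis using True by simp
  next
    case False
    then have "{i. i < n \<and> D = {i}} = {}" by auto
    then show ?thesis using False by simp
  qed
  moreover have "{..<n} \<noteq> {}" using assms(3) by auto
  ultimately show ?thesis
    unfolding rls_def pmf_map D_def by (simp add: measure_pmf_of_set)
qed

lemma length_bxor [simp]: "length (bxor x z) = min (length x) (length z)"
  unfolding bxor_def by simp

lemma nth_bxor: "i < length x \<Longrightarrow> i < length z \<Longrightarrow> bxor x z ! i = (x ! i \<noteq> z ! i)"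
  unfolding bxor_def by simp

lemma length_perm_bits [simp]: "length (perm_bits n \<sigma> x) = n"
  unfolding perm_bits_def by simp

lemma nth_perm_bits: "i < n \<Longrightarrow> perm_bits n \<sigma> x ! i = x ! \<sigma> i"
  unfolding perm_bits_def by simp

lemma diff_positions_bxor:
  assumes "length x = n" "length y = n" "length z = n"
  shows "diff_positions n (bxor x z) (bxor y z) = diff_positions n x y"
  using assms by (auto simp: diff_positions_def nth_bxor)

lemma card_diff_positions_perm_bits:
  assumes "\<sigma> permutes {..<n}"
  shows "card (diff_positions n (perm_bits n \<sigma> x) (perm_bits n \<sigma> y)) = card (diff_positions n x y)"
proof -
  have "diff_positions n (perm_bits n \<sigma> x) (perm_bits n \<sigma> y) = \<sigma> -` diff_positions n x y"
  proof (rule set_eqI)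
    fix i
    have "\<sigma> i < n \<longleftrightarrow> i < n" using permutes_in_image[OF assms, of i] by simp
    then show "i \<in> diff_positions n (perm_bits n \<sigma> x) (perm_bits n \<sigma> y) \<longleftrightarrow> i \<in> \<sigma> -` diff_positions n x y"
      by (cases "i < n") (simp_all add: diff_positions_def nth_perm_bits)
  qed
  then show ?thesis
    using permutes_inj[OF assms] permutes_surj[OF assms] by (simp add: card_vimage_inj)
qed

lemma unary_unbiased_rls:
  assumes "0 < n"
  shows "unary_unbiased n (rls n)"
  unfolding unary_unbiased_def
proof (intro conjI ballI allI impI)
  fix x assume "x \<in> bitstrings n"
  then show "set_pmf (rls n x) \<subseteq> bitstrings n"
    using assms unfolding rls_def bitstrings_def by auto
next
  fix x y z assume "x \<in> bitstrings n" "y \<in> bitstrings n" "z \<in> bitstrings n"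
  then show "pmf (rls n x) y = pmf (rls n (bxor x z)) (bxor y z)"
    using assms unfolding bitstrings_def by (simp add: pmf_rls diff_positions_bxor)
next
  fix \<sigma> x y assume "\<sigma> permutes {..<n}" "x \<in> bitstrings n" "y \<in> bitstrings n"
  then show "pmf (rls n x) y = pmf (rls n (perm_bits n \<sigma> x)) (perm_bits n \<sigma> y)"
    using assms unfolding bitstrings_def by (simp add: pmf_rls card_diff_positions_perm_bits)
qed

section \<open>The black-box algorithm\<close>

(* The acceptance decision may only depend on fitness values, so the algorithm recovers the
   fitness of its current point by replaying its own acceptance rule on the history. *)
fun replay_fitness :: "real list \<Rightarrow> real" where
  "replay_fitness [] = 0"
| "replay_fitness (v # vs) = foldl (\<lambda>c w. if accept c w then w else c) v vs"

definition accept_hist :: "real list \<Rightarrow> bool pmf" where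
  "accept_hist h = return_pmf (accept (replay_fitness (butlast h)) (last h))"

lemma replay_fitness_snoc:
  "h \<noteq> [] \<Longrightarrow> replay_fitness (h @ [w]) = (if accept (replay_fitness h) w then w else replay_fitness h)"
  by (cases h) auto

definition rls_invariant :: "nat \<Rightarrow> bool list \<times> real list \<times> bool \<Rightarrow> bool" where
  "rls_invariant n s \<longleftrightarrow> (case s of (x, h, found) \<Rightarrow>
     length x = n \<and> h \<noteq> [] \<and> replay_fitness h = DLB n x \<and> (found \<or> x \<noteq> replicate n True))"

definition rls_next_state ::
    "nat \<Rightarrow> bool list \<times> real list \<times> bool \<Rightarrow> nat \<Rightarrow> bool list \<times> real list \<times> bool" where
  "rls_next_state n s i = (case s of (x, h, found) \<Rightarrow>
     (rls_step n x i, h @ [DLB n (flip_bit x i)], found \<or> is_opt n (DLB n) (flip_bit x i)))"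

lemma alg_step_rls:
  assumes "rls_invariant n s"
  shows "alg_step n (DLB n) (\<lambda>_. rls n) accept_hist s = map_pmf (rls_next_state n s) (pmf_of_set {..<n})"
proof -
  obtain x h found where s: "s = (x, h, found)" by (cases s)
  have "replay_fitness h = DLB n x" using assms unfolding s rls_invariant_def by simp
  then show ?thesis
    unfolding s alg_step_def rls_def accept_hist_def rls_next_state_def rls_step_def
    by (simp add: bind_map_pmf map_pmf_def bind_return_pmf bind_assoc_pmf Let_def)
qed

lemma set_pmf_uniform_bitstrings [simp]: "set_pmf (pmf_of_set (bitstrings n)) = bitstrings n"
proof (rule set_pmf_of_set)
  show "bitstrings n \<noteq> {}" unfolding bitstrings_def by (auto intro!: exI[of _ "replicate n True"])
  show "finite (bitstrings n)"
    using finite_lists_length_eq[of "UNIV :: bool set" n] unfolding bitstrings_def by simp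
qed

lemma rls_invariant_alg_states:
  assumes "even n" "0 < n" "s \<in> set_pmf (alg_states n (DLB n) (\<lambda>_. rls n) accept_hist t)"
  shows "rls_invariant n s"
proof (rule pmf_chain_invariant[OF alg_states.simps(2) _ _ assms(3)])
  fix s assume "s \<in> set_pmf (alg_states n (DLB n) (\<lambda>_. rls n) accept_hist 0)"
  then obtain x where "x \<in> bitstrings n" "s = (x, [DLB n x], is_opt n (DLB n) x)"
    by (auto simp: alg_init_def)
  then show "rls_invariant n s"
    using is_opt_replicate_True[OF assms(1)] unfolding rls_invariant_def bitstrings_def by auto
next
  fix s s' assume "rls_invariant n s" "s' \<in> set_pmf (alg_step n (DLB n) (\<lambda>_. rls n) accept_hist s)"
  then obtain i where "rls_invariant n s" "s' = rls_next_state n s i"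
    using assms(2) by (auto simp: alg_step_rls)
  then show "rls_invariant n s'"
    using is_opt_replicate_True[OF assms(1)]
    by (auto simp: rls_invariant_def rls_next_state_def rls_step_def replay_fitness_snoc split: prod.splits)
qed

definition state_potential :: "nat \<Rightarrow> bool list \<times> real list \<times> bool \<Rightarrow> ennreal" where
  "state_potential n s = (case s of (x, h, found) \<Rightarrow> if found then 0 else ennreal (potential n x))"

lemma state_potential_drift:
  assumes "rls_invariant n s" "even n" "0 < n"
  shows "(\<integral>\<^sup>+s'. state_potential n s' \<partial>alg_step n (DLB n) (\<lambda>_. rls n) accept_hist s)
           + indicator {s. \<not> snd (snd s)} s \<le> state_potential n s"
proof -
  obtain x h found where s: "s = (x, h, found)" by (cases s)
  have "{..<n} \<noteq> {}" using assms(3) by auto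
  then have int: "(\<integral>\<^sup>+s'. state_potential n s' \<partial>alg_step n (DLB n) (\<lambda>_. rls n) accept_hist s)
      = (\<Sum>i<n. state_potential n (rls_next_state n s i)) / of_nat n"
    by (simp add: alg_step_rls[OF assms(1)] nn_integral_pmf_of_set)
  show ?thesis
  proof (cases found)
    case True
    then show ?thesis unfolding int by (simp add: s state_potential_def rls_next_state_def)
  next
    case False
    then have x: "length x = n" "x \<noteq> replicate n True"
      using assms(1) unfolding s rls_invariant_def by auto
    define S where "S = (\<Sum>i<n. potential n (rls_step n x i))"
    have S_nonneg: "0 \<le> S" unfolding S_def by (intro sum_nonneg potential_nonneg)
    have "(\<Sum>i<n. state_potential n (rls_next_state n s i))
        \<le> (\<Sum>i<n. ennreal (potential n (rls_step n x i)))"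
      by (intro sum_mono) (simp add: s state_potential_def rls_next_state_def)
    also have "\<dots> = ennreal S"
      unfolding S_def by (rule sum_ennreal) (rule potential_nonneg)
    finally have "(\<integral>\<^sup>+s'. state_potential n s' \<partial>alg_step n (DLB n) (\<lambda>_. rls n) accept_hist s) + 1
        \<le> ennreal S / ennreal (real n) + 1"
      unfolding int by (intro add_right_mono)
        (simp add: ennreal_of_nat_eq_real_of_nat divide_right_mono_ennreal)
    also have "\<dots> = ennreal (S / real n + 1)"
      using S_nonneg assms(3) by (simp add: divide_ennreal ennreal_plus)
    also have "\<dots> \<le> ennreal (potential n x)"
      using potential_drift[OF x(1) assms(2) x(2)] assms(3)
      by (intro ennreal_leI) (simp add: S_def field_simps)
    finally show ?thesis using False by (simp add: s state_potential_def)
  qed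
qed

lemma exp_runtime_rls:
  assumes "even n" "0 < n"
  shows "exp_runtime n (DLB n) (\<lambda>_. rls n) accept_hist \<le> ennreal (2 * real n ^ 2)"
proof -
  let ?M = "alg_states n (DLB n) (\<lambda>_. rls n) accept_hist"
  have "(\<Sum>t. ennreal (measure_pmf.prob (?M t) {s. \<not> snd (snd s)}))
      \<le> (\<integral>\<^sup>+s. state_potential n s \<partial>?M 0)"
  proof (rule pmf_chain_additive_drift)
    show "?M (Suc t) = bind_pmf (?M t) (alg_step n (DLB n) (\<lambda>_. rls n) accept_hist)" for t
      by simp
  qed (use state_potential_drift rls_invariant_alg_states assms in blast)
  also have "\<dots> \<le> (\<integral>\<^sup>+s. ennreal (real n ^ 2) \<partial>?M 0)"
    by (intro nn_integral_mono)
      (auto simp: state_potential_def potential_le_square ennreal_leI split: prod.splits)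
  also have "\<dots> = ennreal (real n ^ 2)" by (simp add: measure_pmf.emeasure_space_1)
  finally have "exp_runtime n (DLB n) (\<lambda>_. rls n) accept_hist \<le> 1 + ennreal (real n ^ 2)"
    unfolding exp_runtime_def by (rule add_left_mono)
  also have "\<dots> \<le> ennreal (2 * real n ^ 2)"
  proof -
    have "1 \<le> real n ^ 2" using assms(2) by (simp add: one_le_power)
    then have "1 + real n ^ 2 \<le> 2 * real n ^ 2" by simp
    then show ?thesis by (metis ennreal_1 ennreal_leI ennreal_plus zero_le_one zero_le_power2)
  qed
  finally show ?thesis .
qed

theorem theorem11:
  shows "\<exists>C::real. \<exists>n0::nat. \<forall>n. n \<ge> n0 \<and> even n \<and> n > 0 \<longrightarrow>
     (\<exists>ops acc. (\<forall>h. unary_unbiased n (ops h)) \<and>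
        exp_runtime n (DLB n) ops acc \<le> ennreal (C * real n ^ 2))"
proof (rule exI[of _ 2], rule exI[of _ 0], intro allI impI)
  fix n :: nat
  assume "0 \<le> n \<and> even n \<and> 0 < n"
  then show "\<exists>ops acc. (\<forall>h. unary_unbiased n (ops h)) \<and>
      exp_runtime n (DLB n) ops acc \<le> ennreal (2 * real n ^ 2)"
    using unary_unbiased_rls exp_runtime_rls
    by (intro exI[of _ "\<lambda>_. rls n"] exI[of _ accept_hist]) simp
qed

end
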